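(* Let $\mathcal F_s(\lambda_s)=\sum_{g\ge2}a_g\lambda_s^{2g-2}$ (a formal power series in $\lambda_s$). Under the standing assumptions in the context, $\mathcal F_s$ satisfies $$\theta_{\lambda_s}^2\mathcal F_s+(\theta_{\lambda_s}\mathcal F_s)^2+2\left(1-\frac{2}{3\lambda_s^2}\right)\theta_{\lambda_s}\mathcal F_s+\frac59=0,\qquad \theta_{\lambda_s}=\lambda_s\frac{\partial}{\partial\lambda_s}.$$
   Context: Setting: the polynomial formulation of the BCOV holomorphic anomaly equations on a one-dimensional slice (local coordinate $z$) of the moduli space of a Calabi–Yau threefold. $C_{zzz}$ is the holomorphic Yukawa coupling, assumed nonzero. The genus-$g$ free energies $\mathcal F^{(g)}$ ($g\ge 1$) are polynomials in the generators $S^{zz},S^z,S,K_z$ with coefficients holomorphic in $z$; for $g\ge2$, $\mathcal F^{(g)}$ has weighted degree $3g-3$ (weights $1,2,3,1$) and its term of highest degree in $S^{zz}$ is $a_g\,C_{zzz}^{2g-2}(S^{zz})^{3g-3}$, $a_g\in\mathbb Q$. The total free energy is $\mathcal F=\sum_{g\ge2}\lambda^{2g-2}\mathcal F^{(g)}$, with $\lambda$ the topological string coupling. The scaling limit: replace $S^{zz}$ by $\varepsilon^{2/3}S^{zz}$ and $\lambda$ by $\lambda/\varepsilon$ and let $\varepsilon\to0$; only the terms $a_gC_{zzz}^{2g-2}(S^{zz})^{3g-3}\lambda^{2g-2}$ survive, giving $\mathcal F_s=\sum_{g\ge2}a_g\lambda_s^{2g-2}$ with rescaled coupling $\lambda_s^2=\lambda^2C_{zzz}^2(S^{zz})^3$.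 "l.o.t." means terms of lower degree in $S^{zz}$. $D_z$ is a derivation with $D_zS^{zz}=-C_{zzz}(S^{zz})^2+\text{l.o.t.}$ and $D_zC_{zzz}=3C_{zzz}^2S^{zz}+\text{l.o.t.}$; $D_z\mathcal F^{(1)}=\tfrac12C_{zzz}S^{zz}+\text{l.o.t.}$; and for $g\ge2$, $\partial\mathcal F^{(g)}/\partial S^{zz}=\frac12\sum_{h=1}^{g-1}D_z\mathcal F^{(h)}D_z\mathcal F^{(g-h)}+\frac12D_zD_z\mathcal F^{(g-1)}$. *)

theory Defs
  imports "HOL-Computational_Algebra.Polynomial" "HOL-Computational_Algebra.Formal_Laurent_Series"
begin

definition theta_op :: "'a::field fls \<Rightarrow> 'a fls" where
  "theta_op f = fls_X * fls_deriv f"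

text \<open>Scaling-limit free energy F_s(lambda_s) = sum over g >= 2 of a_g lambda_s^(2g-2),
  as a formal (Laurent) series with rational coefficients.\<close>
definition scaling_free_energy :: "(nat \<Rightarrow> rat) \<Rightarrow> rat fls" where
  "scaling_free_energy a =
     fps_to_fls (Abs_fps (\<lambda>n. if even n \<and> 2 \<le> n then a (n div 2 + 1) else 0))"

end

theory Submission
  imports Defs
begin

(* Only the top power of S^zz survives the scaling limit, so everything is read off leading
   coefficients. D raises the S-degree by one and, because D S = -C S^2 + ..., acts on a top
   coefficient c of S^n by c \<mapsto> const_deriv c - n C c; with D C = 3 C^2 S + ... this makes the
   top term of D F^(j+1) equal to b_j C^(2j+1) S^(3j+1), where b_0 = 1/2 and b_j = 3 j a_(j+1).
   The top coefficient of the anomaly equation for F^(m+2) is the quadratic recursion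
   2 b_(m+1) = sum_k b_k b_(m-k) + (3m+2) b_m, i.e. the Riccati equation
   lambda^2 (3 theta V + 2 V^2 + 4 V) = 4 V - 2 for V = sum_m b_m lambda^(2m).
   Since 3 theta F_s = 2 V - 1, substituting V gives the stated equation. *)

lemma coeff_mult_degree_le:
  fixes p q :: "'a::comm_semiring_0 poly"
  assumes "degree p \<le> m" "degree q \<le> n"
  shows "coeff (p * q) (m + n) = coeff p m * coeff q n"
proof (cases "degree p = m \<and> degree q = n")
  case True
  then show ?thesis using coeff_mult_degree_sum[of p q] by simp
next
  case False
  then have "degree p < m \<or> degree q < n" using assms by auto
  moreover from this have "degree (p * q) < m + n" using degree_mult_le[of p q] assms by linarith
  ultimately show ?thesis by (auto simp: coeff_eq_0)
qed

lemma degree_diff_monom_lessD: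
  fixes p :: "'a::ab_group_add poly"
  assumes "degree (p - monom c n) < n"
  shows "degree p \<le> n" and "coeff p n = c"
proof -
  have "p = (p - monom c n) + monom c n" by simp
  then show "degree p \<le> n"
    by (metis assms degree_add_le degree_monom_le less_imp_le)
  have "coeff (p - monom c n) n = 0" using assms by (rule coeff_eq_0)
  then show "coeff p n = c" by simp
qed

locale ring_derivation =
  fixes d :: "'a::comm_ring_1 \<Rightarrow> 'a"
  assumes add: "d (x + y) = d x + d y"
    and mult: "d (x * y) = x * d y + d x * y"
begin

lemma zero [simp]: "d 0 = 0"
  using add[of 0 0] by simp

lemma one [simp]: "d 1 = 0"
  using mult[of 1 1] by simp

lemma uminus: "d (- x) = - d x"
  using add[of x "- x"] by (simp add: eq_neg_iff_add_eq_0 add.commute)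

lemma of_nat [simp]: "d (of_nat n) = 0"
  by (induction n) (simp_all add: add)

lemma of_int [simp]: "d (of_int z) = 0"
  by (cases z rule: int_cases2) (simp_all add: uminus)

lemma power: "d (x ^ Suc k) = of_nat (Suc k) * x ^ k * d x"
  by (induction k) (simp_all add: mult algebra_simps)

end

lemma ring_derivation_of_rat:
  fixes d :: "'a::field_char_0 \<Rightarrow> 'a"
  assumes "ring_derivation d"
  shows "d (of_rat q) = 0"
proof -
  interpret ring_derivation d by fact
  have inverse: "d (inverse x) = 0" if "d x = 0" for x
  proof (cases "x = 0")
    case False
    have "x * d (inverse x) = d (x * inverse x)" using that by (simp add: mult)
    also have "\<dots> = 0" using False by simp
    finally show ?thesis using False by simp
  qed simp
  obtain i j where "q = Fract i j" "j \<noteq> 0" by (cases q) auto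
  then show ?thesis by (simp add: of_rat_rat divide_inverse mult inverse)
qed

locale poly_derivation =
  fixes D :: "'a::comm_ring_1 poly \<Rightarrow> 'a poly" and C :: 'a
  assumes D_add: "D (p + q) = D p + D q"
    and D_mult: "D (p * q) = p * D q + D p * q"
    and degree_D_const: "degree (D [:c:]) \<le> 1"
    and degree_D_X: "degree (D [:0, 1:] + monom C 2) \<le> 1"
begin

definition const_deriv :: "'a \<Rightarrow> 'a" where
  "const_deriv c = coeff (D [:c:]) 1"

sublocale const_deriv: ring_derivation const_deriv
proof
  show "const_deriv (x + y) = const_deriv x + const_deriv y" for x y
    using D_add[of "[:x:]" "[:y:]"] by (simp add: const_deriv_def)
  show "const_deriv (x * y) = x * const_deriv y + const_deriv x * y" for x y
  proof -
    have "D [:x * y:] = smult x (D [:y:]) + smult y (D [:x:])"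
      using D_mult[of "[:x:]" "[:y:]"] by (simp add: mult.commute)
    then show ?thesis by (simp add: const_deriv_def mult.commute)
  qed
qed

lemma D_X_top: "degree (D [:0, 1:]) \<le> 2" "coeff (D [:0, 1:]) 2 = - C"
proof -
  have "degree (D [:0, 1:] - monom (- C) 2) < 2"
    using degree_D_X by (simp flip: minus_monom)
  then show "degree (D [:0, 1:]) \<le> 2" "coeff (D [:0, 1:]) 2 = - C"
    by (rule degree_diff_monom_lessD)+
qed

lemma D_top:
  assumes "degree p \<le> n"
  shows "degree (D p) \<le> n + 1 \<and>
    coeff (D p) (n + 1) = const_deriv (coeff p n) - of_nat n * C * coeff p n"
  using assms
proof (induction n arbitrary: p)
  case 0
  then have "p = [:coeff p 0:]" by (simp add: degree_0_id)
  then show ?case using degree_D_const[of "coeff p 0"] by (simp add: const_deriv_def)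
next
  case (Suc k)
  obtain c q where p: "p = pCons c q" by (cases p)
  have "degree q \<le> k"
    using Suc.prems degree_pCons_eq[of q c] unfolding p by (cases "q = 0") auto
  note IH = Suc.IH[OF this]
  have "p = [:c:] + [:0, 1:] * q" by (simp add: p)
  then have Dp: "D p = D [:c:] + [:0, 1:] * D q + D [:0, 1:] * q"
    by (simp only: D_add D_mult add.assoc)
  have "degree (D [:c:]) \<le> Suc k + 1"
    using degree_D_const[of c] by simp
  moreover have "degree ([:0, 1:] * D q) \<le> Suc k + 1"
    using degree_mult_le[of "[:0, 1:]" "D q"] IH by simp
  moreover have "degree (D [:0, 1:] * q) \<le> Suc k + 1"
    using degree_mult_le[of "D [:0, 1:]" q] D_X_top(1) \<open>degree q \<le> k\<close> by simp
  ultimately have degree_Dp: "degree (D p) \<le> Suc k + 1"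
    unfolding Dp by (intro degree_add_le)
  have "coeff (D [:0, 1:] * q) (2 + k) = - C * coeff q k"
    using coeff_mult_degree_le[OF D_X_top(1) \<open>degree q \<le> k\<close>] D_X_top(2) by simp
  with IH have "coeff (D p) (Suc k + 1) = const_deriv (coeff q k) - of_nat (Suc k) * C * coeff q k"
    unfolding Dp using degree_D_const[of c] by (simp add: coeff_eq_0 algebra_simps)
  then show ?case using degree_Dp by (simp add: p)
qed

end

definition DF_leading_coeff :: "(nat \<Rightarrow> rat) \<Rightarrow> nat \<Rightarrow> rat" where
  "DF_leading_coeff a j = (if j = 0 then 1 / 2 else 3 * of_nat j * a (j + 1))"

locale bcov_anomaly = poly_derivation D C
  for D :: "'r::field_char_0 poly \<Rightarrow> 'r poly" and C +
  fixes G1 :: "'r poly" and F DF :: "nat \<Rightarrow> 'r poly" and a :: "nat \<Rightarrow> rat"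
  assumes C_nonzero: "C \<noteq> 0"
    and D_C: "degree (D [:C:] - monom (3 * C ^ 2) 1) = 0"
    and DF1: "degree (G1 - monom (C / 2) 1) = 0"
    and DF_def: "DF h = (if h = 1 then G1 else D (F h))"
    and leading: "g \<ge> 2 \<Longrightarrow>
      degree (F g - monom (of_rat (a g) * C ^ (2 * g - 2)) (3 * g - 3)) < 3 * g - 3"
    and anomaly: "g \<ge> 2 \<Longrightarrow> pderiv (F g) =
      smult (1 / 2) (\<Sum>h = 1..g - 1. DF h * DF (g - h)) + smult (1 / 2) (D (DF (g - 1)))"
begin

lemma const_deriv_rat_C_power:
  "const_deriv (of_rat q * C ^ k) = 3 * of_nat k * of_rat q * C ^ (k + 1)"
proof -
  have C: "const_deriv C = 3 * C ^ 2"
    using degree_diff_monom_lessD(2)[of "D [:C:]" "3 * C ^ 2" 1] D_C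
    by (simp add: const_deriv_def)
  have C_power: "const_deriv (C ^ k) = 3 * of_nat k * C ^ (k + 1)"
  proof (cases k)
    case (Suc n)
    then show ?thesis
      unfolding Suc const_deriv.power C by (simp add: power2_eq_square algebra_simps)
  qed simp
  have "const_deriv (of_rat q) = 0"
    by (rule ring_derivation_of_rat) (fact const_deriv.ring_derivation_axioms)
  then show ?thesis
    by (simp add: const_deriv.mult C_power)
qed

lemma F_top:
  "degree (F (j + 2)) \<le> 3 * j + 3"
  "coeff (F (j + 2)) (3 * j + 3) = of_rat (a (j + 2)) * C ^ (2 * j + 2)"
proof -
  have "degree (F (j + 2) - monom (of_rat (a (j + 2)) * C ^ (2 * j + 2)) (3 * j + 3)) < 3 * j + 3"
    using leading[of "j + 2"] by (simp add: algebra_simps)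
  then show "degree (F (j + 2)) \<le> 3 * j + 3"
    "coeff (F (j + 2)) (3 * j + 3) = of_rat (a (j + 2)) * C ^ (2 * j + 2)"
    by (rule degree_diff_monom_lessD)+
qed

lemma DF_top:
  "degree (DF (j + 1)) \<le> 3 * j + 1 \<and>
    coeff (DF (j + 1)) (3 * j + 1) = of_rat (DF_leading_coeff a j) * C ^ (2 * j + 1)"
proof (cases j)
  case 0
  have "degree (G1 - monom (C / 2) 1) < 1" using DF1 by simp
  then show ?thesis
    using degree_diff_monom_lessD[of G1 "C / 2" 1] 0
    by (simp add: DF_def DF_leading_coeff_def of_rat_divide)
next
  case (Suc i)
  then have "DF (j + 1) = D (F (i + 2))" by (simp add: DF_def)
  moreover have "const_deriv (of_rat (a (i + 2)) * C ^ (2 * i + 2)) - of_nat (3 * i + 3) * C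
      * (of_rat (a (i + 2)) * C ^ (2 * i + 2)) = of_rat (DF_leading_coeff a j) * C ^ (2 * j + 1)"
    unfolding const_deriv_rat_C_power using Suc
    by (simp add: DF_leading_coeff_def of_rat_add of_rat_mult of_rat_of_nat_eq algebra_simps)
  ultimately show ?thesis
    using D_top[OF F_top(1)[of i]] F_top(2)[of i] Suc by (simp add: numeral_eq_Suc)
qed

abbreviation beta :: "nat \<Rightarrow> rat" where
  "beta \<equiv> DF_leading_coeff a"

lemma top_coeff_pderiv_F:
  "coeff (pderiv (F (m + 2))) (3 * m + 2) = of_rat (beta (Suc m)) * C ^ (2 * m + 2)"
proof -
  have "Suc (3 * m + 2) = 3 * m + 3" by simp
  then have "coeff (pderiv (F (m + 2))) (3 * m + 2)
      = of_nat (3 * m + 3) * coeff (F (m + 2)) (3 * m + 3)"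
    by (simp only: coeff_pderiv)
  then show ?thesis unfolding F_top(2)
    by (simp add: DF_leading_coeff_def of_rat_mult of_rat_add of_rat_of_nat_eq algebra_simps)
qed

lemma top_coeff_DF_product:
  assumes "k \<le> m"
  shows "coeff (DF (k + 1) * DF (m - k + 1)) (3 * m + 2)
    = of_rat (beta k * beta (m - k)) * C ^ (2 * m + 2)"
proof -
  have degree_split: "3 * m + 2 = (3 * k + 1) + (3 * (m - k) + 1)"
    and "2 * m + 2 = (2 * k + 1) + (2 * (m - k) + 1)"
    using assms by simp_all
  then have power_split: "C ^ (2 * m + 2) = C ^ (2 * k + 1) * C ^ (2 * (m - k) + 1)"
    unfolding power_add[symmetric] by simp
  show ?thesis
    unfolding degree_split power_split
    using coeff_mult_degree_le[of "DF (k + 1)" "3 * k + 1" "DF (m - k + 1)" "3 * (m - k) + 1"]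
      DF_top[of k] DF_top[of "m - k"]
    by (simp add: of_rat_mult)
qed

lemma top_coeff_DF_convolution:
  "coeff (\<Sum>h = 1..m + 1. DF h * DF (m + 2 - h)) (3 * m + 2)
    = of_rat (\<Sum>k\<le>m. beta k * beta (m - k)) * C ^ (2 * m + 2)"
proof -
  have "(\<Sum>h = 1..m + 1. DF h * DF (m + 2 - h)) = (\<Sum>k = 0..m. DF (Suc k) * DF (m + 2 - Suc k))"
    using sum.shift_bounds_cl_Suc_ivl[of "\<lambda>h. DF h * DF (m + 2 - h)" 0 m] by simp
  also have "\<dots> = (\<Sum>k\<le>m. DF (k + 1) * DF (m - k + 1))"
    by (intro sum.cong) (auto simp: Suc_diff_le)
  finally have "coeff (\<Sum>h = 1..m + 1. DF h * DF (m + 2 - h)) (3 * m + 2)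
      = (\<Sum>k\<le>m. coeff (DF (k + 1) * DF (m - k + 1)) (3 * m + 2))"
    by (simp add: coeff_sum)
  also have "\<dots> = (\<Sum>k\<le>m. of_rat (beta k * beta (m - k)) * C ^ (2 * m + 2))"
    using top_coeff_DF_product by (intro sum.cong) auto
  finally show ?thesis
    by (simp add: of_rat_sum sum_distrib_right)
qed

lemma top_coeff_D_DF:
  "coeff (D (DF (m + 1))) (3 * m + 2) = of_rat (of_nat (3 * m + 2) * beta m) * C ^ (2 * m + 2)"
proof -
  have "coeff (D (DF (m + 1))) (3 * m + 1 + 1) = const_deriv (of_rat (beta m) * C ^ (2 * m + 1))
      - of_nat (3 * m + 1) * C * (of_rat (beta m) * C ^ (2 * m + 1))"
    using D_top[of "DF (m + 1)" "3 * m + 1"] DF_top[of m] by simp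
  then show ?thesis
    unfolding const_deriv_rat_C_power
    by (simp add: of_rat_add of_rat_mult of_rat_of_nat_eq algebra_simps)
qed

lemma DF_leading_coeff_rec:
  "2 * beta (Suc m) = (\<Sum>k\<le>m. beta k * beta (m - k)) + of_nat (3 * m + 2) * beta m"
proof -
  have "pderiv (F (m + 2)) = smult (1 / 2) (\<Sum>h = 1..m + 1. DF h * DF (m + 2 - h))
      + smult (1 / 2) (D (DF (m + 1)))"
    using anomaly[of "m + 2"] by simp
  then have "coeff (pderiv (F (m + 2))) (3 * m + 2)
      = 1 / 2 * coeff (\<Sum>h = 1..m + 1. DF h * DF (m + 2 - h)) (3 * m + 2)
        + 1 / 2 * coeff (D (DF (m + 1))) (3 * m + 2)"
    by (simp only: coeff_add coeff_smult)
  then have "of_rat (beta (Suc m)) * C ^ (2 * m + 2)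
      = of_rat ((\<Sum>k\<le>m. beta k * beta (m - k)) / 2 + of_nat (3 * m + 2) * beta m / 2)
        * C ^ (2 * m + 2)"
    unfolding top_coeff_pderiv_F top_coeff_DF_convolution top_coeff_D_DF
    by (simp add: of_rat_add of_rat_divide algebra_simps)
  then show ?thesis using C_nonzero by simp
qed

end

definition even_series :: "(nat \<Rightarrow> 'a::zero) \<Rightarrow> 'a fps" where
  "even_series b = Abs_fps (\<lambda>n. if even n then b (n div 2) else 0)"

lemma even_series_nth: "even_series b $ n = (if even n then b (n div 2) else 0)"
  by (simp add: even_series_def)

lemma even_series_eq_iff: "even_series b = even_series c \<longleftrightarrow> b = c"
proof
  assume "even_series b = even_series c"
  then have "even_series b $ (2 * m) = even_series c $ (2 * m)" for m by simp
  then show "b = c" by (auto simp: even_series_nth)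
qed simp

lemma even_series_add:
  fixes b c :: "nat \<Rightarrow> 'a::monoid_add"
  shows "even_series b + even_series c = even_series (\<lambda>m. b m + c m)"
  by (rule fps_ext) (simp add: even_series_nth)

lemma even_series_diff:
  fixes b c :: "nat \<Rightarrow> 'a::ab_group_add"
  shows "even_series b - even_series c = even_series (\<lambda>m. b m - c m)"
  by (rule fps_ext) (simp add: even_series_nth)

lemma fps_const_mult_even_series:
  fixes b :: "nat \<Rightarrow> 'a::semiring_1"
  shows "fps_const c * even_series b = even_series (\<lambda>m. c * b m)"
  by (rule fps_ext) (simp add: even_series_nth)

lemma fps_const_as_even_series: "fps_const c = even_series (\<lambda>m. if m = 0 then c else 0)"
  by (rule fps_ext) (auto simp: even_series_nth elim: oddE)

lemma fps_X_mult_deriv_nth: "(fps_X * fps_deriv f) $ n = of_nat n * f $ n"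
  by (cases n) simp_all

lemma fps_X_deriv_even_series:
  fixes b :: "nat \<Rightarrow> 'a::comm_semiring_1"
  shows "fps_X * fps_deriv (even_series b) = even_series (\<lambda>m. 2 * of_nat m * b m)"
  by (rule fps_ext) (auto simp: fps_X_mult_deriv_nth even_series_nth elim: evenE)

lemma fps_X_square_mult_even_series:
  fixes b :: "nat \<Rightarrow> 'a::comm_semiring_1"
  shows "fps_X ^ 2 * even_series b = even_series (\<lambda>m. if m = 0 then 0 else b (m - 1))"
proof (rule fps_ext)
  fix n
  show "(fps_X ^ 2 * even_series b) $ n = even_series (\<lambda>m. if m = 0 then 0 else b (m - 1)) $ n"
  proof (cases "n < 2")
    case True
    then have "n = 0 \<or> n = 1" by auto
    then show ?thesis by (auto simp: fps_X_power_mult_nth even_series_nth)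
  next
    case False
    define k where "k = n - 2"
    have n: "n = k + 2" using False by (simp add: k_def)
    show ?thesis unfolding n by (simp add: fps_X_power_mult_nth even_series_nth)
  qed
qed

lemma sum_atMost_even_only:
  fixes f :: "nat \<Rightarrow> 'a::comm_monoid_add"
  assumes "\<And>i. odd i \<Longrightarrow> f i = 0"
  shows "(\<Sum>i\<le>2 * m. f i) = (\<Sum>k\<le>m. f (2 * k))"
proof (induction m)
  case (Suc m)
  have "(\<Sum>i\<le>2 * Suc m. f i) = (\<Sum>i\<le>2 * m. f i) + f (2 * m + 1) + f (2 * m + 2)"
    by simp
  then show ?case using Suc assms[of "2 * m + 1"] by simp
qed simp

lemma even_series_square:
  fixes b :: "nat \<Rightarrow> 'a::comm_semiring_1"
  shows "even_series b ^ 2 = even_series (\<lambda>m. \<Sum>k\<le>m. b k * b (m - k))"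
proof (rule fps_ext)
  fix n
  have product: "(even_series b ^ 2) $ n = (\<Sum>i\<le>n. even_series b $ i * even_series b $ (n - i))"
    by (simp add: power2_eq_square fps_mult_nth atLeast0AtMost)
  show "(even_series b ^ 2) $ n = even_series (\<lambda>m. \<Sum>k\<le>m. b k * b (m - k)) $ n"
  proof (cases "even n")
    case True
    then obtain m where n: "n = 2 * m" by blast
    have "(\<Sum>i\<le>2 * m. even_series b $ i * even_series b $ (2 * m - i))
        = (\<Sum>k\<le>m. even_series b $ (2 * k) * even_series b $ (2 * m - 2 * k))"
      by (rule sum_atMost_even_only) (simp add: even_series_nth)
    also have "\<dots> = (\<Sum>k\<le>m. b k * b (m - k))"
      by (intro sum.cong) (auto simp: even_series_nth simp flip: diff_mult_distrib2)
    finally show ?thesis using product by (simp add: n even_series_nth)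
  next
    case False
    have "odd i \<or> odd (n - i)" if "i \<le> n" for i
      using False that by (metis even_add le_add_diff_inverse)
    then have "even_series b $ i * even_series b $ (n - i) = 0" if "i \<le> n" for i
      using that by (auto simp: even_series_nth)
    then show ?thesis using product False by (simp add: even_series_nth)
  qed
qed

lemma even_series_riccati:
  fixes b :: "nat \<Rightarrow> 'a::field_char_0"
  assumes b0: "2 * b 0 = 1"
    and b_rec: "\<And>m. 2 * b (Suc m) = (\<Sum>k\<le>m. b k * b (m - k)) + of_nat (3 * m + 2) * b m"
  shows "fps_X ^ 2 * (3 * (fps_X * fps_deriv (even_series b)) + 2 * even_series b ^ 2
      + 4 * even_series b) = 4 * even_series b - 2"
proof -
  have "fps_X ^ 2 * (3 * (fps_X * fps_deriv (even_series b)) + 2 * even_series b ^ 2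
      + 4 * even_series b) = even_series (\<lambda>m. if m = 0 then 0 else
        6 * (of_nat (m - 1) * b (m - 1)) + 2 * (\<Sum>k\<le>m - 1. b k * b (m - 1 - k)) + 4 * b (m - 1))"
    by (simp add: numeral_fps_const fps_X_deriv_even_series even_series_square
        fps_const_mult_even_series even_series_add fps_X_square_mult_even_series mult.assoc)
  also have "\<dots> = even_series (\<lambda>m. 4 * b m - (if m = 0 then 2 else 0))"
    unfolding even_series_eq_iff
  proof
    fix m
    show "(if m = 0 then 0 else 6 * (of_nat (m - 1) * b (m - 1))
        + 2 * (\<Sum>k\<le>m - 1. b k * b (m - 1 - k)) + 4 * b (m - 1))
        = 4 * b m - (if m = 0 then 2 else 0)"
    proof (cases m)
      case 0
      then show ?thesis using b0 by simp
    next
      case (Suc n)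
      have "4 * b (Suc n) = 2 * (2 * b (Suc n))" by simp
      also have "\<dots> = 2 * ((\<Sum>k\<le>n. b k * b (n - k)) + of_nat (3 * n + 2) * b n)"
        by (simp only: b_rec)
      finally show ?thesis using Suc by (simp add: algebra_simps)
    qed
  qed
  also have "\<dots> = 4 * even_series b - 2"
    unfolding numeral_fps_const fps_const_mult_even_series
    by (simp add: fps_const_as_even_series even_series_diff)
  finally show ?thesis .
qed

lemma theta_op_fps_to_fls: "theta_op (fps_to_fls f) = fps_to_fls (fps_X * fps_deriv f)"
  by (simp add: theta_op_def fls_deriv_fps_to_fls fls_times_fps_to_fls)

lemma theta_scaling_free_energy:
  "3 * theta_op (scaling_free_energy a) = 2 * fps_to_fls (even_series (DF_leading_coeff a)) - 1"
proof -
  define S where "S = even_series (\<lambda>m. if m = 0 then 0 else a (m + 1))"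
  have "scaling_free_energy a = fps_to_fls S"
    unfolding scaling_free_energy_def S_def even_series_def
    by (rule arg_cong[of _ _ "\<lambda>f. fps_to_fls (Abs_fps f)"], rule ext) (auto elim!: evenE)
  moreover have "3 * (fps_X * fps_deriv S) = 2 * even_series (DF_leading_coeff a) - 1"
    unfolding S_def numeral_fps_const fps_X_deriv_even_series fps_const_mult_even_series
    unfolding fps_const_1_eq_1[symmetric] fps_const_as_even_series even_series_diff even_series_eq_iff
    by (auto simp: DF_leading_coeff_def)
  then have "fps_to_fls (3 * (fps_X * fps_deriv S))
      = fps_to_fls (2 * even_series (DF_leading_coeff a) - 1)"
    by (rule arg_cong)
  ultimately show ?thesis
    by (simp add: theta_op_fps_to_fls fls_times_fps_to_fls)
qed

lemma riccati_substitution: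
  fixes x u v s t :: "'a::field_char_0"
  assumes "x \<noteq> 0" "3 * u = 2 * v - 1" "3 * s = 2 * t"
    and "x ^ 2 * (3 * t + 2 * v ^ 2 + 4 * v) = 4 * v - 2"
  shows "s + u ^ 2 + 2 * (1 - 2 / (3 * x ^ 2)) * u + 5 / 9 = 0"
proof -
  have u: "u = (2 * v - 1) / 3" and s: "s = 2 * t / 3"
    using assms(2,3) by (simp_all add: eq_divide_eq ac_simps)
  have "9 * x ^ 2 * (s + u ^ 2 + 2 * (1 - 2 / (3 * x ^ 2)) * u + 5 / 9)
      = 2 * (x ^ 2 * (3 * t + 2 * v ^ 2 + 4 * v) - (4 * v - 2))"
    unfolding u s using assms(1) by (simp add: field_simps power2_eq_square)
  then show ?thesis using assms(1,4) by simp
qed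

theorem mainTheorem2:
  fixes D :: "'r::field_char_0 poly \<Rightarrow> 'r poly"
    and C :: 'r
    and G1 :: "'r poly"
    and F :: "nat \<Rightarrow> 'r poly"
    and DF :: "nat \<Rightarrow> 'r poly"
    and a :: "nat \<Rightarrow> rat"
  assumes C_nonzero: "C \<noteq> 0"
    and D_add: "\<forall>p q. D (p + q) = D p + D q"
    and D_Leibniz: "\<forall>p q. D (p * q) = p * D q + D p * q"
    and D_coeff: "\<forall>c. degree (D [:c:]) \<le> 1"
    and D_Szz: "degree (D [:0, 1:] + monom C 2) \<le> 1"
    and D_C: "degree (D [:C:] - monom (3 * C ^ 2) 1) = 0"
    and DF1: "degree (G1 - monom (C / 2) 1) = 0"
    and DF_def: "\<forall>h. DF h = (if h = 1 then G1 else D (F h))"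
    and leading: "\<forall>g\<ge>2. degree (F g - monom (of_rat (a g) * C ^ (2 * g - 2)) (3 * g - 3))
                          < 3 * g - 3"
    and anomaly: "\<forall>g\<ge>2. pderiv (F g) =
                     smult (1 / 2) (\<Sum>h = 1..g - 1. DF h * DF (g - h))
                     + smult (1 / 2) (D (DF (g - 1)))"
  shows "theta_op (theta_op (scaling_free_energy a)) + (theta_op (scaling_free_energy a))\<^sup>2
         + 2 * (1 - 2 / (3 * fls_X\<^sup>2)) * theta_op (scaling_free_energy a) + 5 / 9 = 0"
proof -
  interpret bcov_anomaly D C G1 F DF a
    by unfold_locales (use assms in auto)
  define V where "V = even_series (DF_leading_coeff a)"
  define U where "U = theta_op (scaling_free_energy a)"
  have riccati: "fps_X ^ 2 * (3 * (fps_X * fps_deriv V) + 2 * V ^ 2 + 4 * V) = 4 * V - 2"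
    unfolding V_def
    by (rule even_series_riccati) (simp add: DF_leading_coeff_def, rule DF_leading_coeff_rec)
  have "fls_X ^ 2 * (3 * theta_op (fps_to_fls V) + 2 * fps_to_fls V ^ 2 + 4 * fps_to_fls V)
      = 4 * fps_to_fls V - 2"
    using arg_cong[OF riccati, of fps_to_fls]
    by (simp add: theta_op_def fls_deriv_fps_to_fls fls_times_fps_to_fls fps_to_fls_power)
  moreover have U: "3 * U = 2 * fps_to_fls V - 1"
    unfolding U_def V_def by (rule theta_scaling_free_energy)
  moreover have "3 * theta_op U = 2 * theta_op (fps_to_fls V)"
    using arg_cong[OF U, of theta_op] by (simp add: theta_op_def)
  ultimately show ?thesis
    unfolding U_def[symmetric] by (intro riccati_substitution) simp_all
qed

end
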